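(* Let $p$ be a prime, $\mathbb{C}_p$ the field of complex $p$-adic numbers with norm $|\cdot|_p$, $a,b,c\in\mathbb{C}_p$ with $b\neq0$, $c\neq ab$, $f(x)=\frac{x+a}{bx+c}$ for $x\neq -c/b$. Fix a square root $\sqrt{(c-1)^2+4ab}$ and let $x_{1}=\frac{1-c+\sqrt{(c-1)^2+4ab}}{2b}$, $x_2=\frac{1-c-\sqrt{(c-1)^2+4ab}}{2b}$. Put $$\delta_1=\left|\frac{(bx_1+c)^2}{c-ab}\right|_p-1,\qquad \delta_2=\left|\frac{bx_1+c}{b}\right|_p-1.$$ If $x\in\mathbb{C}_p$ satisfies $|x-x_2|_p>\frac{1+\delta_2}{1+\delta_1}$, then $f(x)\in S_{1+\delta_2}(x_2)$.
   Context: $S_r(x_2)=\{y\in\mathbb{C}_p:|y-x_2|_p=r\}$. *)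

theory Defs
  imports "HOL-Computational_Algebra.Polynomial"
begin

text \<open>We characterise
  (K, N) being (isometrically isomorphic to) C_p: K has characteristic 0, N is a
  non-archimedean absolute value with N p = 1/p (so it restricts to the p-adic
  absolute value on the rationals, by Ostrowski), K is complete and algebraically
  closed, and the algebraic numbers are dense in K. These properties determine
  C_p up to isometric isomorphism (C_p = completion of an algebraic closure of Q_p).\<close>

definition abs_value :: "('a::field \<Rightarrow> real) \<Rightarrow> bool" where
  "abs_value N \<longleftrightarrow> (\<forall>x. 0 \<le> N x) \<and> (\<forall>x. N x = 0 \<longleftrightarrow> x = 0)
     \<and> (\<forall>x y. N (x * y) = N x * N y) \<and> (\<forall>x y. N (x + y) \<le> N x + N y)"

definition non_archimedean :: "('a::field \<Rightarrow> real) \<Rightarrow> bool" where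
  "non_archimedean N \<longleftrightarrow> (\<forall>x y. N (x + y) \<le> max (N x) (N y))"

definition complete_wrt :: "('a::field \<Rightarrow> real) \<Rightarrow> bool" where
  "complete_wrt N \<longleftrightarrow> (\<forall>X :: nat \<Rightarrow> 'a.
     (\<forall>e>0. \<exists>M. \<forall>m\<ge>M. \<forall>n\<ge>M. N (X m - X n) < e) \<longrightarrow>
     (\<exists>L. (\<lambda>n. N (X n - L)) \<longlonglongrightarrow> 0))"

definition alg_closed_field :: "'a::field itself \<Rightarrow> bool" where
  "alg_closed_field _ \<longleftrightarrow> (\<forall>q :: 'a poly. degree q > 0 \<longrightarrow> (\<exists>z. poly q z = 0))"

definition is_Cp :: "nat \<Rightarrow> ('a::field_char_0 \<Rightarrow> real) \<Rightarrow> bool" where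
  "is_Cp p N \<longleftrightarrow> prime p \<and> abs_value N \<and> non_archimedean N
     \<and> N (of_nat p) = 1 / real p \<and> complete_wrt N \<and> alg_closed_field TYPE('a)
     \<and> (\<forall>x. \<forall>e>0. \<exists>y. algebraic y \<and> N (x - y) < e)"

definition sphere_p :: "('a \<Rightarrow> real) \<Rightarrow> real \<Rightarrow> 'a::field \<Rightarrow> 'a set" where
  "sphere_p N r x0 = {y. N (y - x0) = r}"

end

theory Submission
  imports Defs
begin

text \<open>The fixed point x2 of the Moebius map f satisfies
  f x - x2 = (x - x2) (b x1 + c) / (b x + c), by Vieta's relation 1 - b x2 = b x1 + c.
  If |x - x2| is large, the non-archimedean inequality is an equality for the denominator:
  |b x + c| = |b| |x - x2|. Hence |f x - x2| = |b x1 + c| / |b| = 1 + \<delta>2. The hypothesis on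
  |x - x2| says exactly that it is large, because (b x1 + c)(b x2 + c) = c - a b.\<close>

lemma abs_value_nonneg: "abs_value N \<Longrightarrow> 0 \<le> N x"
  by (simp add: abs_value_def)

lemma abs_value_eq_0_iff: "abs_value N \<Longrightarrow> N x = 0 \<longleftrightarrow> x = 0"
  by (simp add: abs_value_def)

lemma abs_value_pos: "abs_value N \<Longrightarrow> x \<noteq> 0 \<Longrightarrow> 0 < N x"
  using abs_value_nonneg abs_value_eq_0_iff by (metis order_le_neq_trans)

lemma abs_value_mult: "abs_value N \<Longrightarrow> N (x * y) = N x * N y"
  by (simp add: abs_value_def)

lemma abs_value_one:
  assumes "abs_value N" shows "N 1 = 1"
  using abs_value_mult[OF assms, of 1 1] abs_value_eq_0_iff[OF assms, of 1] by simp

lemma abs_value_minus: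
  assumes N: "abs_value N" shows "N (- x) = N x"
proof -
  have "N (-1) * N (-1) = 1"
    using abs_value_mult[OF N, of "-1" "-1"] abs_value_one[OF N] by simp
  then have "N (-1) = 1"
    using abs_value_nonneg[OF N, of "-1"] by (metis power2_eq_square one_power2 power2_eq_imp_eq zero_le_one)
  then show ?thesis
    using abs_value_mult[OF N, of "-1" x] by simp
qed

lemma abs_value_divide:
  assumes N: "abs_value N" shows "N (x / y) = N x / N y"
proof (cases "y = 0")
  case True
  then show ?thesis using abs_value_eq_0_iff[OF N, of 0] by simp
next
  case False
  then have "N (x / y) * N y = N x" using abs_value_mult[OF N, of "x / y" y] by simp
  then show ?thesis using abs_value_pos[OF N False] by (simp add: field_simps)
qed

lemma non_archimedean_add_eq_left:
  assumes "abs_value N" "non_archimedean N" and less: "N z < N y"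
  shows "N (y + z) = N y"
proof -
  have ultra: "N (u + w) \<le> max (N u) (N w)" for u w
    using assms(2) by (simp add: non_archimedean_def)
  have "N y \<le> max (N (y + z)) (N (- z))"
    using ultra[of "y + z" "- z"] by simp
  then show ?thesis using ultra[of y z] less abs_value_minus[OF assms(1), of z] by linarith
qed

lemma mobius_minus_fixed_point:
  fixes a b c x x0 :: "'a::field"
  assumes fixed: "x0 + a = x0 * (b * x0 + c)" and den: "b * x + c \<noteq> 0"
  shows "(x + a) / (b * x + c) - x0 = (x - x0) * (1 - b * x0) / (b * x + c)"
proof -
  have "x + a - x0 * (b * x + c) = (x - x0) * (1 - b * x0)"
    using fixed by (simp add: algebra_simps)
  then show ?thesis using den by (simp add: field_simps)
qed

lemma mobius_abs_value_minus_fixed_point: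
  fixes N :: "'a::field \<Rightarrow> real"
  assumes N: "abs_value N" "non_archimedean N" and b: "b \<noteq> 0"
    and fixed: "x0 + a = x0 * (b * x0 + c)"
    and far: "N (b * x0 + c) < N (b * (x - x0))"
  shows "b * x + c \<noteq> 0" and "N ((x + a) / (b * x + c) - x0) = N (1 - b * x0) / N b"
proof -
  have split: "b * x + c = b * (x - x0) + (b * x0 + c)" by (simp add: algebra_simps)
  have den: "N (b * x + c) = N b * N (x - x0)"
    unfolding split non_archimedean_add_eq_left[OF N far] by (rule abs_value_mult[OF N(1)])
  have "N (x - x0) \<noteq> 0"
    using far abs_value_nonneg[OF N(1), of "b * x0 + c"] abs_value_mult[OF N(1), of b] by auto
  then have "N (b * x + c) \<noteq> 0" using den abs_value_pos[OF N(1) b] by simp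
  then show den0: "b * x + c \<noteq> 0" using abs_value_eq_0_iff[OF N(1)] by blast
  show "N ((x + a) / (b * x + c) - x0) = N (1 - b * x0) / N b"
    unfolding mobius_minus_fixed_point[OF fixed den0] abs_value_divide[OF N(1)]
      abs_value_mult[OF N(1)] den
    using \<open>N (x - x0) \<noteq> 0\<close> by simp
qed

lemma mobius_fixed_points_vieta:
  fixes a b c s :: "'a::field_char_0"
  assumes b: "b \<noteq> 0" and s: "s ^ 2 = (c - 1) ^ 2 + 4 * a * b"
    and x1: "x1 = (1 - c + s) / (2 * b)" and x2: "x2 = (1 - c - s) / (2 * b)"
  shows "b * x1 + b * x2 = 1 - c"
    and "(b * x1 + c) * (b * x2 + c) = c - a * b"
    and "x2 + a = x2 * (b * x2 + c)"
proof -
  have bx1: "b * x1 = (1 - c + s) / 2" and bx2: "b * x2 = (1 - c - s) / 2"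
    using x1 x2 b by simp_all
  show "b * x1 + b * x2 = 1 - c" unfolding bx1 bx2 by (simp add: field_simps)
  show "(b * x1 + c) * (b * x2 + c) = c - a * b"
    unfolding bx1 bx2 using s by (simp add: field_simps power2_eq_square)
  have "4 * b * (x2 * (b * x2 + c) - (x2 + a))
      = (2 * (b * x2)) ^ 2 + 2 * (c - 1) * (2 * (b * x2)) - 4 * a * b"
    by (simp add: algebra_simps power2_eq_square)
  also have "\<dots> = s ^ 2 - ((c - 1) ^ 2 + 4 * a * b)"
    unfolding bx2 by (simp add: field_simps power2_eq_square)
  finally have "x2 * (b * x2 + c) - (x2 + a) = 0" using s b by simp
  then show "x2 + a = x2 * (b * x2 + c)" by simp
qed

theorem lemma3p8:
  fixes N :: "'a::field_char_0 \<Rightarrow> real" and p :: nat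
    and a b c s x x1 x2 :: 'a and f :: "'a \<Rightarrow> 'a" and \<delta>1 \<delta>2 :: real
  assumes Cp: "is_Cp p N"
    and b: "b \<noteq> 0" and cab: "c \<noteq> a * b"
    and f_def: "\<And>y. f y = (y + a) / (b * y + c)"
    and s: "s ^ 2 = (c - 1) ^ 2 + 4 * a * b"
    and x1: "x1 = (1 - c + s) / (2 * b)"
    and x2: "x2 = (1 - c - s) / (2 * b)"
    and d1: "\<delta>1 = N ((b * x1 + c) ^ 2 / (c - a * b)) - 1"
    and d2: "\<delta>2 = N ((b * x1 + c) / b) - 1"
    and hx: "N (x - x2) > (1 + \<delta>2) / (1 + \<delta>1)"
  shows "x \<noteq> - c / b \<and> f x \<in> sphere_p N (1 + \<delta>2) x2"
proof -
  have N: "abs_value N" "non_archimedean N" using Cp by (auto simp: is_Cp_def)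
  note vieta = mobius_fixed_points_vieta[OF b s x1 x2]
  define u v where "u = b * x1 + c" and "v = b * x2 + c"
  have u: "u = 1 - b * x2" using vieta(1) by (simp add: u_def algebra_simps)
  have uv: "u * v = c - a * b" using vieta(2) by (simp add: u_def v_def)
  then have "u \<noteq> 0" "v \<noteq> 0" using cab by auto
  then have "0 < N u" "0 < N v" using abs_value_pos[OF N(1)] by auto
  have "1 + \<delta>1 = N u * N u / (N u * N v)"
    using d1 unfolding u_def[symmetric] uv[symmetric]
    by (simp only: abs_value_divide[OF N(1)] abs_value_mult[OF N(1)] power2_eq_square)
  then have "1 + \<delta>1 = N u / N v" using \<open>0 < N u\<close> by simp
  moreover have radius: "1 + \<delta>2 = N u / N b" by (simp add: d2 u_def abs_value_divide[OF N(1)])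
  ultimately have "N v / N b < N (x - x2)"
    using hx \<open>0 < N u\<close> \<open>0 < N v\<close> by simp
  then have far: "N v < N (b * (x - x2))"
    unfolding abs_value_mult[OF N(1)] using abs_value_pos[OF N(1) b] by (simp add: field_simps)
  note mobius = mobius_abs_value_minus_fixed_point[OF N b vieta(3) far[unfolded v_def]]
  have "x \<noteq> - c / b" using mobius(1) b by (auto simp: field_simps)
  then show ?thesis using mobius(2) radius by (simp add: sphere_p_def f_def u)
qed

end
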